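(* Let $E$ be a finite nonempty set, $f:2^E\to\mathbb{N}$ an integral polymatroid rank function, $d\in\mathbb{N}$, $\vec t\in\mathbb{N}^E$, and let $C_e:\mathbb{N}\times\mathbb{N}\to\mathbb{R}_+$, $e\in E$, be regular functions. Let $\vec x$ be an optimal solution of $P(\vec t,d)$, let $e^*\in E$ and $\vec t'=\vec t+\chi_{e^*}$. Define $g^*\in\arg\min_{g\in D_{e^*}(\vec x)} C^+_g(x_g;t_g)$ if $D_{e^*}(\vec x)\neq\emptyset$, and $g^*=e^*$ otherwise. Then the better (with respect to the objective of $P(\vec t',d)$) of the two solutions $\vec x$ and $\vec x-\chi_{e^*}+\chi_{g^*}$ is an optimal solution of $P(\vec t',d)$.
   Context: $\mathbb{N}=\{0,1,2,\dots\}$. A set function $f:2^E\to\mathbb{N}$ is an integral polymatroid rank function if $f(\emptyset)=0$, $f(U)\le f(V)$ for $U\subseteq V$, and $f(U)+f(V)\ge f(U\cup V)+f(U\cap V)$ for all $U,V\subseteq E$. For $\vec x\in\mathbb{N}^E$ and $U\subseteq E$, $x(U)=\sum_{e\in U}x_e$. For $d\in\mathbb{N}$, $\mathbb{B}_f(d)=\{\vec x\in\mathbb{N}^E: x(U)\le f(U)\ \forall U\subseteq E,\ x(E)=d\}$. $P(\vec t,d)$ denotes the problem: minimize $\sum_{e\in E}C_e(x_e;t_e)$ subject to $\vec x\in\mathbb{B}_f(d)$. For $C:\mathbb{N}\times\mathbb{N}\to\mathbb{R}$, $C^-(x;t)=C(x;t)-C(x-1;t)$ (for $x\ge1$) and $C^+(x;t)=C(x+1;t)-C(x;t)$.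 $C$ is regular if $C^-(x;t)\le C^-(x;t+1)$ and $C^-(x;t+1)\le C^-(x+1;t)$ for all $x\ge 1$, $t\in\mathbb{N}$. $\chi_e\in\mathbb{N}^E$ is the unit vector of coordinate $e$. For $\vec x\in\mathbb{B}_f(d)$ and $e\in E$, $D_e(\vec x)=\{g\in E\setminus\{e\}: \vec x+\chi_g-\chi_e\in\mathbb{B}_f(d)\}$. *)

theory Defs
  imports Complex_Main
begin

text \<open>Vectors in N^E are represented as functions 'e => nat that vanish outside E.\<close>

definition polymatroid_rank :: "'e set \<Rightarrow> ('e set \<Rightarrow> nat) \<Rightarrow> bool" where
  "polymatroid_rank E f \<longleftrightarrow>
     f {} = 0 \<and>
     (\<forall>U V. U \<subseteq> V \<and> V \<subseteq> E \<longrightarrow> f U \<le> f V) \<and>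
     (\<forall>U V. U \<subseteq> E \<and> V \<subseteq> E \<longrightarrow> f (U \<union> V) + f (U \<inter> V) \<le> f U + f V)"

definition chi :: "'e \<Rightarrow> 'e \<Rightarrow> nat" where
  "chi e = (\<lambda>g. if g = e then 1 else 0)"

definition base_set :: "'e set \<Rightarrow> ('e set \<Rightarrow> nat) \<Rightarrow> nat \<Rightarrow> ('e \<Rightarrow> nat) set" where
  "base_set E f d = {x. (\<forall>e. e \<notin> E \<longrightarrow> x e = 0) \<and>
                       (\<forall>U. U \<subseteq> E \<longrightarrow> sum x U \<le> f U) \<and> sum x E = d}"

definition objective :: "'e set \<Rightarrow> ('e \<Rightarrow> nat \<Rightarrow> nat \<Rightarrow> real) \<Rightarrow> ('e \<Rightarrow> nat) \<Rightarrow> ('e \<Rightarrow> nat) \<Rightarrow> real" where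
  "objective E C t x = (\<Sum>e\<in>E. C e (x e) (t e))"

definition optimal_sol :: "'e set \<Rightarrow> ('e set \<Rightarrow> nat) \<Rightarrow> ('e \<Rightarrow> nat \<Rightarrow> nat \<Rightarrow> real)
    \<Rightarrow> ('e \<Rightarrow> nat) \<Rightarrow> nat \<Rightarrow> ('e \<Rightarrow> nat) \<Rightarrow> bool" where
  "optimal_sol E f C t d x \<longleftrightarrow> x \<in> base_set E f d \<and>
     (\<forall>y \<in> base_set E f d. objective E C t x \<le> objective E C t y)"

definition Cminus :: "(nat \<Rightarrow> nat \<Rightarrow> real) \<Rightarrow> nat \<Rightarrow> nat \<Rightarrow> real" where
  "Cminus C x t = C x t - C (x - 1) t"

definition Cplus :: "(nat \<Rightarrow> nat \<Rightarrow> real) \<Rightarrow> nat \<Rightarrow> nat \<Rightarrow> real" where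
  "Cplus C x t = C (x + 1) t - C x t"

definition regular :: "(nat \<Rightarrow> nat \<Rightarrow> real) \<Rightarrow> bool" where
  "regular C \<longleftrightarrow> (\<forall>x t. x \<ge> 1 \<longrightarrow>
      Cminus C x t \<le> Cminus C x (t + 1) \<and> Cminus C x (t + 1) \<le> Cminus C (x + 1) t)"

definition Dset :: "'e set \<Rightarrow> ('e set \<Rightarrow> nat) \<Rightarrow> nat \<Rightarrow> ('e \<Rightarrow> nat) \<Rightarrow> 'e \<Rightarrow> 'e set" where
  "Dset E f d x e = {g \<in> E - {e}. (\<lambda>h. x h + chi g h - chi e h) \<in> base_set E f d}"

end

theory Submission
  imports Defs
begin

text \<open>
  Raising \<open>t\<^sub>e\<^sub>*\<close> by one changes the cost of a base \<open>w\<close> only in the term of \<open>e*\<close>, by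
  \<open>C\<^sub>e\<^sub>*(w\<^sub>e\<^sub>*; t+1) - C\<^sub>e\<^sub>*(w\<^sub>e\<^sub>*; t)\<close>, which regularity makes nondecreasing in \<open>w\<^sub>e\<^sub>*\<close>; so \<open>x\<close>
  still beats every base \<open>w\<close> with \<open>w\<^sub>e\<^sub>* \<ge> x\<^sub>e\<^sub>*\<close>. A base with \<open>w\<^sub>e\<^sub>* < x\<^sub>e\<^sub>*\<close> is treated by
  induction on \<open>x\<^sub>e\<^sub>* - w\<^sub>e\<^sub>*\<close>: the simultaneous exchange property of polymatroid bases gives
  \<open>g\<close> with \<open>x\<^sub>g < w\<^sub>g\<close> such that \<open>x - \<chi>\<^sub>e\<^sub>* + \<chi>\<^sub>g\<close> and \<open>w + \<chi>\<^sub>e\<^sub>* - \<chi>\<^sub>g\<close> are both bases.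
  Discrete convexity of the \<open>C\<^sub>h\<close> and the local optimality of \<open>x\<close> show that the second move does
  not increase the new cost, and in the last step, where it produces a base with \<open>w\<^sub>e\<^sub>* = x\<^sub>e\<^sub>*\<close>,
  the minimality of \<open>C\<^sup>+\<^sub>g\<^sub>*(x\<^sub>g\<^sub>*)\<close> lets \<open>x - \<chi>\<^sub>e\<^sub>* + \<chi>\<^sub>g\<^sub>*\<close> take its place.
\<close>

definition transfer :: "('e \<Rightarrow> nat) \<Rightarrow> 'e \<Rightarrow> 'e \<Rightarrow> 'e \<Rightarrow> nat" where
  "transfer x g e = (\<lambda>h. x h + chi g h - chi e h)"

lemma Dset_transfer: "Dset E f d x e = {g \<in> E - {e}. transfer x g e \<in> base_set E f d}"
  by (simp add: Dset_def transfer_def)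

lemma transfer_self [simp]: "transfer x e e = x"
  by (simp add: transfer_def)

lemma transfer_apply:
  "g \<noteq> e \<Longrightarrow> transfer x g e h = (if h = g then x h + 1 else if h = e then x h - 1 else x h)"
  by (simp add: transfer_def chi_def)

lemma sum_chi: "finite U \<Longrightarrow> sum (chi g) U = (if g \<in> U then 1 else 0)"
  by (simp add: chi_def)

lemma sum_transfer:
  assumes "finite U" "g \<noteq> e" "1 \<le> x e"
  shows "sum (transfer x g e) U + (if e \<in> U then 1 else 0) = sum x U + (if g \<in> U then 1 else 0)"
proof -
  have "transfer x g e h + chi e h = x h + chi g h" for h
    using assms(2,3) by (auto simp: transfer_def chi_def)
  then have "sum (transfer x g e) U + sum (chi e) U = sum x U + sum (chi g) U"
    by (simp flip: sum.distrib)
  then show ?thesis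
    using assms(1) by (simp add: sum_chi)
qed

lemma transfer_in_base_set:
  assumes "finite E" and x: "x \<in> base_set E f d" and "e \<in> E" "g \<in> E" "g \<noteq> e" "1 \<le> x e"
    and slack: "\<And>U. U \<subseteq> E \<Longrightarrow> g \<in> U \<Longrightarrow> e \<notin> U \<Longrightarrow> sum x U < f U"
  shows "transfer x g e \<in> base_set E f d"
proof -
  have sum_eq: "sum (transfer x g e) U + (if e \<in> U then 1 else 0) = sum x U + (if g \<in> U then 1 else 0)"
    if "U \<subseteq> E" for U
    using sum_transfer[of U g e x] finite_subset[OF that \<open>finite E\<close>] \<open>g \<noteq> e\<close> \<open>1 \<le> x e\<close> by blast
  have "sum (transfer x g e) U \<le> f U" if U: "U \<subseteq> E" for U
    using sum_eq[OF U] slack[OF U] x U by (auto simp: base_set_def split: if_splits)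
  moreover have "sum (transfer x g e) E = d"
    using sum_eq[of E] x \<open>e \<in> E\<close> \<open>g \<in> E\<close> by (simp add: base_set_def)
  moreover have "transfer x g e h = 0" if "h \<notin> E" for h
    using that x \<open>e \<in> E\<close> \<open>g \<in> E\<close> by (auto simp: base_set_def transfer_def chi_def)
  ultimately show ?thesis
    by (simp add: base_set_def)
qed

lemma base_set_transfer_pos:
  assumes "finite E" "x \<in> base_set E f d" "g \<in> E" "g \<noteq> e" "transfer x g e \<in> base_set E f d"
  shows "0 < x e"
proof (rule ccontr)
  assume "\<not> 0 < x e"
  then have "transfer x g e = (\<lambda>h. x h + chi g h)"
    using \<open>g \<noteq> e\<close> by (auto simp: transfer_def chi_def)
  then have "sum (transfer x g e) E = sum x E + 1"
    using assms(1,3) by (simp add: sum.distrib sum_chi)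
  then show False
    using assms(2,5) by (simp add: base_set_def)
qed

definition tight_sets :: "'e set \<Rightarrow> ('e set \<Rightarrow> nat) \<Rightarrow> ('e \<Rightarrow> nat) \<Rightarrow> 'e set set" where
  "tight_sets E f x = {U. U \<subseteq> E \<and> sum x U = f U}"

context
  fixes E :: "'e set" and f :: "'e set \<Rightarrow> nat" and x :: "'e \<Rightarrow> nat"
  assumes finite_E: "finite E" and polymatroid: "polymatroid_rank E f"
    and feasible: "\<And>U. U \<subseteq> E \<Longrightarrow> sum x U \<le> f U"
begin

lemma tight_sets_Un_Int:
  assumes "U \<in> tight_sets E f x" "V \<in> tight_sets E f x"
  shows "U \<union> V \<in> tight_sets E f x \<and> U \<inter> V \<in> tight_sets E f x"
proof -
  have UV: "U \<subseteq> E" "V \<subseteq> E" "sum x U = f U" "sum x V = f V"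
    using assms by (auto simp: tight_sets_def)
  then have "sum x (U \<union> V) + sum x (U \<inter> V) = sum x U + sum x V"
    using finite_E by (intro sum.union_inter) (auto intro: finite_subset)
  moreover have "f (U \<union> V) + f (U \<inter> V) \<le> f U + f V"
    using polymatroid UV by (simp add: polymatroid_rank_def)
  moreover have "sum x (U \<union> V) \<le> f (U \<union> V)" "sum x (U \<inter> V) \<le> f (U \<inter> V)"
    using feasible[of "U \<union> V"] feasible[of "U \<inter> V"] UV by auto
  ultimately show ?thesis
    using UV by (auto simp: tight_sets_def)
qed

lemma Union_tight_sets:
  "finite \<V> \<Longrightarrow> \<V> \<subseteq> tight_sets E f x \<Longrightarrow> \<Union>\<V> \<in> tight_sets E f x"
proof (induction rule: finite_induct)
  case empty
  then show ?case
    using polymatroid by (simp add: tight_sets_def polymatroid_rank_def)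
next
  case (insert V \<V>)
  then show ?case
    using tight_sets_Un_Int[of V "\<Union>\<V>"] by simp
qed

lemma Inter_tight_sets:
  "finite \<U> \<Longrightarrow> \<U> \<noteq> {} \<Longrightarrow> \<U> \<subseteq> tight_sets E f x \<Longrightarrow> \<Inter>\<U> \<in> tight_sets E f x"
proof (induction rule: finite_ne_induct)
  case (insert U \<U>)
  then show ?case
    using tight_sets_Un_Int[of U "\<Inter>\<U>"] by simp
qed simp

end

lemma base_set_sum_diff_le:
  assumes "finite E" "polymatroid_rank E f" and x: "x \<in> base_set E f d" and z: "z \<in> base_set E f d"
    and W: "W \<in> tight_sets E f x" and Z: "Z \<subseteq> E" "Z = E \<or> Z \<in> tight_sets E f z"
  shows "sum x (Z - W) \<le> sum z (Z - W)"
proof -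
  have W': "W \<subseteq> E" "sum x W = f W"
    using W by (auto simp: tight_sets_def)
  have fin: "finite Z" "finite W"
    using assms(1) Z(1) W'(1) by (auto intro: finite_subset)
  have "sum x (Z \<union> W) + sum z (Z \<inter> W) \<le> sum z Z + sum x W"
    using Z(2)
  proof
    assume "Z = E"
    then show ?thesis
      using x z W' by (simp add: base_set_def Int_absorb1 Un_absorb2)
  next
    assume "Z \<in> tight_sets E f z"
    then have "sum z Z = f Z"
      by (simp add: tight_sets_def)
    moreover have "f (Z \<union> W) + f (Z \<inter> W) \<le> f Z + f W"
      using assms(2) Z(1) W' by (simp add: polymatroid_rank_def)
    moreover have "sum x (Z \<union> W) \<le> f (Z \<union> W)" "sum z (Z \<inter> W) \<le> f (Z \<inter> W)"
      using x z Z(1) W' by (auto simp: base_set_def dest!: spec[of _ "Z \<union> W"] spec[of _ "Z \<inter> W"])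
    ultimately show ?thesis
      using W' by linarith
  qed
  moreover have "sum x (Z \<union> W) = sum x W + sum x (Z - W)"
    using fin by (metis Un_Diff_cancel2 sum.union_disjoint Diff_disjoint finite_Diff add.commute Int_commute)
  moreover have "sum z Z = sum z (Z \<inter> W) + sum z (Z - W)"
    using fin by (simp add: sum.Int_Diff)
  ultimately show ?thesis
    by linarith
qed

lemma base_set_exchange:
  assumes fin: "finite E" and pm: "polymatroid_rank E f"
    and x: "x \<in> base_set E f d" and z: "z \<in> base_set E f d" and "e \<in> E" and "z e < x e"
  shows "\<exists>g\<in>E. g \<noteq> e \<and> x g < z g \<and>
           transfer x g e \<in> base_set E f d \<and> transfer z e g \<in> base_set E f d"
proof (rule ccontr)
  assume no_exchange: "\<not> ?thesis"
  have feasible: "\<And>U. U \<subseteq> E \<Longrightarrow> sum x U \<le> f U" "\<And>U. U \<subseteq> E \<Longrightarrow> sum z U \<le> f U"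
    using x z by (auto simp: base_set_def)
  define \<U> where "\<U> = {U \<in> tight_sets E f z. e \<in> U}"
  define \<V> where "\<V> = {V \<in> tight_sets E f x. e \<notin> V}"
  define Z where "Z = E \<inter> \<Inter>\<U>"
  define W where "W = \<Union>\<V>"
  have finite_families: "finite \<U>" "finite \<V>"
    using fin by (auto simp: \<U>_def \<V>_def tight_sets_def intro: finite_subset[of _ "Pow E"])
  have W: "W \<in> tight_sets E f x"
    unfolding W_def using Union_tight_sets[OF fin pm feasible(1) finite_families(2)] by (auto simp: \<V>_def)
  have Z: "Z = E \<or> Z \<in> tight_sets E f z"
  proof (cases "\<U> = {}")
    case False
    then have "\<Inter>\<U> \<in> tight_sets E f z"
      using Inter_tight_sets[OF fin pm feasible(2) finite_families(1)] by (auto simp: \<U>_def)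
    then show ?thesis
      by (simp add: Z_def tight_sets_def Int_absorb1)
  qed (simp add: Z_def)
  \<comment> \<open>A tight set blocking the exchange of \<open>e\<close> against \<open>g\<close> removes \<open>g\<close> from \<open>Z - W\<close>.\<close>
  have "z g \<le> x g" if "g \<in> Z - W" for g
  proof (rule ccontr)
    assume "\<not> z g \<le> x g"
    moreover have "g \<in> E"
      using that by (simp add: Z_def)
    ultimately have "g \<noteq> e" "1 \<le> x e" "1 \<le> z g"
      and "transfer x g e \<notin> base_set E f d \<or> transfer z e g \<notin> base_set E f d"
      using no_exchange \<open>z e < x e\<close> by auto
    then have "(\<exists>V. V \<subseteq> E \<and> g \<in> V \<and> e \<notin> V \<and> \<not> sum x V < f V) \<or>
               (\<exists>U. U \<subseteq> E \<and> e \<in> U \<and> g \<notin> U \<and> \<not> sum z U < f U)"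
      using transfer_in_base_set[OF fin x \<open>e \<in> E\<close> \<open>g \<in> E\<close>]
        transfer_in_base_set[OF fin z \<open>g \<in> E\<close> \<open>e \<in> E\<close>] by metis
    then have "(\<exists>V\<in>\<V>. g \<in> V) \<or> (\<exists>U\<in>\<U>. g \<notin> U)"
      using feasible by (metis (mono_tags, lifting) \<U>_def \<V>_def tight_sets_def le_less mem_Collect_eq)
    then show False
      using that by (auto simp: Z_def W_def)
  qed
  moreover have "e \<in> Z - W"
    using \<open>e \<in> E\<close> by (auto simp: Z_def W_def \<U>_def \<V>_def)
  moreover have "finite (Z - W)"
    using fin by (simp add: Z_def)
  ultimately have "sum z (Z - W) < sum x (Z - W)"
    using \<open>z e < x e\<close> by (intro sum_strict_mono_ex1) auto
  moreover have "sum x (Z - W) \<le> sum z (Z - W)"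
    using base_set_sum_diff_le[OF fin pm x z W _ Z] by (simp add: Z_def)
  ultimately show False
    by simp
qed

lemma Cplus_eq_Cminus_Suc: "Cplus c k t = Cminus c (k + 1) t"
  by (simp add: Cplus_def Cminus_def)

lemma regular_Cminus_le_Cminus_Suc: "regular c \<Longrightarrow> 1 \<le> k \<Longrightarrow> Cminus c k (t + 1) \<le> Cminus c (k + 1) t"
  by (simp add: regular_def)

lemma regular_Cminus_mono:
  assumes "regular c" "1 \<le> k" "k \<le> m"
  shows "Cminus c k t \<le> Cminus c m t"
  using \<open>k \<le> m\<close>
proof (induction m rule: dec_induct)
  case (step n)
  have "Cminus c n t \<le> Cminus c n (t + 1)" "Cminus c n (t + 1) \<le> Cminus c (n + 1) t"
    using assms(1,2) step.hyps by (auto simp: regular_def)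
  with step.IH show ?case
    by simp
qed simp

lemma regular_Cplus_le_Cminus: "regular c \<Longrightarrow> k < m \<Longrightarrow> Cplus c k t \<le> Cminus c m t"
  unfolding Cplus_eq_Cminus_Suc by (rule regular_Cminus_mono) auto

lemma regular_time_increment_mono:
  assumes "regular c" "k \<le> m"
  shows "c k (t + 1) - c k t \<le> c m (t + 1) - c m t"
  using \<open>k \<le> m\<close>
proof (induction m rule: dec_induct)
  case (step n)
  have "Cminus c (n + 1) t \<le> Cminus c (n + 1) (t + 1)"
    using assms(1) by (simp add: regular_def)
  with step.IH show ?case
    by (simp add: Cminus_def)
qed simp

lemma objective_transfer:
  assumes "finite E" "e \<in> E" "g \<in> E" "g \<noteq> e" "1 \<le> w e"
  shows "objective E C t (transfer w g e)
           = objective E C t w + Cplus (C g) (w g) (t g) - Cminus (C e) (w e) (t e)"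
proof -
  have split: "(\<Sum>h\<in>E. F h) = F e + F g + (\<Sum>h\<in>E - {e} - {g}. F h)" for F :: "'a \<Rightarrow> real"
    using assms(1-4) by (simp add: sum.remove[of E e] sum.remove[of "E - {e}" g])
  have "(\<Sum>h\<in>E - {e} - {g}. C h (transfer w g e h) (t h)) = (\<Sum>h\<in>E - {e} - {g}. C h (w h) (t h))"
    using assms(4) by (intro sum.cong) (auto simp: transfer_apply)
  moreover have "transfer w g e e = w e - 1" "transfer w g e g = w g + 1"
    using assms(4) by (auto simp: transfer_apply)
  ultimately show ?thesis
    unfolding objective_def split[of "\<lambda>h. C h (transfer w g e h) (t h)"] split[of "\<lambda>h. C h (w h) (t h)"]
    by (simp add: Cplus_def Cminus_def)
qed

lemma objective_time_increment:
  assumes "finite E" "e \<in> E"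
  shows "objective E C (\<lambda>h. t h + chi e h) w
           = objective E C t w + (C e (w e) (t e + 1) - C e (w e) (t e))"
proof -
  have split: "(\<Sum>h\<in>E. F h) = F e + (\<Sum>h\<in>E - {e}. F h)" for F :: "'a \<Rightarrow> real"
    using assms by (simp add: sum.remove)
  have "(\<Sum>h\<in>E - {e}. C h (w h) (t h + chi e h)) = (\<Sum>h\<in>E - {e}. C h (w h) (t h))"
    by (intro sum.cong) (auto simp: chi_def)
  then show ?thesis
    unfolding objective_def split[of "\<lambda>h. C h (w h) (t h + chi e h)"] split[of "\<lambda>h. C h (w h) (t h)"]
    by (simp add: chi_def)
qed

lemma optimal_solI_min:
  assumes "x \<in> base_set E f d" "y \<in> base_set E f d"
    and min_le: "\<And>w. w \<in> base_set E f d \<Longrightarrow> min (objective E C t x) (objective E C t y) \<le> objective E C t w"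
  shows "(objective E C t x \<le> objective E C t y \<longrightarrow> optimal_sol E f C t d x) \<and>
         (objective E C t y \<le> objective E C t x \<longrightarrow> optimal_sol E f C t d y)"
  using assms by (auto simp: optimal_sol_def min_absorb1 min_absorb2)

locale reoptimization =
  fixes E :: "'e set" and f :: "'e set \<Rightarrow> nat" and d :: nat
    and C :: "'e \<Rightarrow> nat \<Rightarrow> nat \<Rightarrow> real" and t :: "'e \<Rightarrow> nat" and x :: "'e \<Rightarrow> nat" and e :: 'e
  assumes finite_E: "finite E" and polymatroid: "polymatroid_rank E f"
    and regular: "\<And>h. h \<in> E \<Longrightarrow> regular (C h)"
    and optimal: "optimal_sol E f C t d x" and e_in_E: "e \<in> E"
begin

abbreviation t' :: "'e \<Rightarrow> nat" where
  "t' \<equiv> \<lambda>h. t h + chi e h"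

abbreviation D :: "'e set" where
  "D \<equiv> Dset E f d x e"

lemma x_in_base_set: "x \<in> base_set E f d"
  using optimal by (simp add: optimal_sol_def)

lemma objective_x_le: "w \<in> base_set E f d \<Longrightarrow> objective E C t x \<le> objective E C t w"
  using optimal by (simp add: optimal_sol_def)

lemma objective_t'_x_le_if_ge:
  assumes "w \<in> base_set E f d" "x e \<le> w e"
  shows "objective E C t' x \<le> objective E C t' w"
  using objective_x_le[OF assms(1)] regular_time_increment_mono[OF regular[OF e_in_E] assms(2), of "t e"]
  by (simp add: objective_time_increment[OF finite_E e_in_E])

lemma exchange_if_less:
  assumes "w \<in> base_set E f d" "w e < x e"
  obtains g where "g \<in> D" "x g < w g" "transfer w e g \<in> base_set E f d"
  using base_set_exchange[OF finite_E polymatroid x_in_base_set assms(1) e_in_E assms(2)]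
  by (auto simp: Dset_transfer that)

lemma Cminus_le_Cplus_if_in_D:
  assumes "g \<in> D"
  shows "Cminus (C e) (x e) (t e) \<le> Cplus (C g) (x g) (t g)"
proof -
  have g: "g \<in> E" "g \<noteq> e" "transfer x g e \<in> base_set E f d"
    using assms by (auto simp: Dset_transfer)
  then have "1 \<le> x e"
    using base_set_transfer_pos[OF finite_E x_in_base_set] by fastforce
  then show ?thesis
    using objective_x_le[OF g(3)] objective_transfer[OF finite_E e_in_E g(1,2)] by simp
qed

lemma objective_t'_transfer_le_if_less:
  assumes gstar: "gstar \<in> D" "\<And>g. g \<in> D \<Longrightarrow> Cplus (C gstar) (x gstar) (t gstar) \<le> Cplus (C g) (x g) (t g)"
  shows "w \<in> base_set E f d \<Longrightarrow> w e < x e \<Longrightarrow> objective E C t' (transfer x gstar e) \<le> objective E C t' w"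
proof (induction "x e - w e" arbitrary: w rule: less_induct)
  case less
  obtain g where g: "g \<in> D" "x g < w g" and w'_base: "transfer w e g \<in> base_set E f d"
    using exchange_if_less[OF less.prems] .
  have "g \<in> E" "g \<noteq> e" "gstar \<in> E" "gstar \<noteq> e"
    using g(1) gstar(1) by (auto simp: Dset_transfer)
  define w' where "w' = transfer w e g"
  have w'_e: "w' e = w e + 1"
    using \<open>g \<noteq> e\<close> by (simp add: w'_def transfer_apply)
  have y_cost: "objective E C t' (transfer x gstar e)
      = objective E C t' x + Cplus (C gstar) (x gstar) (t gstar) - Cminus (C e) (x e) (t e + 1)"
    using objective_transfer[OF finite_E e_in_E \<open>gstar \<in> E\<close> \<open>gstar \<noteq> e\<close>, of x C t'] \<open>gstar \<noteq> e\<close> less.prems(2)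
    by (simp add: chi_def)
  have w'_cost: "objective E C t' w'
      = objective E C t' w + Cminus (C e) (w e + 1) (t e + 1) - Cminus (C g) (w g) (t g)"
    using objective_transfer[OF finite_E \<open>g \<in> E\<close> e_in_E, of w C t'] \<open>g \<noteq> e\<close> g(2)
    by (simp add: w'_def chi_def Cplus_eq_Cminus_Suc)
  have g_exchange: "Cplus (C gstar) (x gstar) (t gstar) \<le> Cminus (C g) (w g) (t g)"
    using order_trans[OF gstar(2)[OF g(1)] regular_Cplus_le_Cminus[OF regular[OF \<open>g \<in> E\<close>] g(2)]] .
  show ?case
  proof (cases "w e + 1 = x e")
    case True
    then have "objective E C t' x \<le> objective E C t' w'"
      using objective_t'_x_le_if_ge w'_base w'_e by (simp add: w'_def)
    then show ?thesis
      using y_cost w'_cost g_exchange True by simp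
  next
    case False
    have "Cminus (C e) (w e + 1) (t e + 1) \<le> Cminus (C e) (w e + 2) (t e)"
      using regular_Cminus_le_Cminus_Suc[OF regular[OF e_in_E]] by simp
    also have "\<dots> \<le> Cminus (C e) (x e) (t e)"
      using False less.prems(2) by (intro regular_Cminus_mono[OF regular[OF e_in_E]]) auto
    also have "\<dots> \<le> Cplus (C g) (x g) (t g)"
      by (rule Cminus_le_Cplus_if_in_D[OF g(1)])
    also have "\<dots> \<le> Cminus (C g) (w g) (t g)"
      using regular_Cplus_le_Cminus[OF regular[OF \<open>g \<in> E\<close>] g(2)] .
    finally have "objective E C t' w' \<le> objective E C t' w"
      using w'_cost by simp
    moreover have "objective E C t' (transfer x gstar e) \<le> objective E C t' w'"
      using False less.prems(2) w'_base w'_e by (intro less.hyps) (auto simp: w'_def)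
    ultimately show ?thesis
      by simp
  qed
qed

lemma ge_if_D_empty:
  assumes "D = {}" "w \<in> base_set E f d"
  shows "x e \<le> w e"
proof (rule ccontr)
  assume "\<not> x e \<le> w e"
  then obtain g where "g \<in> D"
    using exchange_if_less[OF assms(2)] by (metis not_le)
  with assms(1) show False
    by simp
qed

end

theorem theorem3p2:
  fixes E :: "'e set" and f :: "'e set \<Rightarrow> nat" and d :: nat
    and t :: "'e \<Rightarrow> nat" and C :: "'e \<Rightarrow> nat \<Rightarrow> nat \<Rightarrow> real"
    and x :: "'e \<Rightarrow> nat" and estar gstar :: 'e
  assumes "finite E" and "E \<noteq> {}"
    and "polymatroid_rank E f"
    and "\<forall>e. e \<notin> E \<longrightarrow> t e = 0"
    and "\<forall>e\<in>E. \<forall>a b. C e a b \<ge> 0"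
    and "\<forall>e\<in>E. regular (C e)"
    and "optimal_sol E f C t d x"
    and "estar \<in> E"
    and "Dset E f d x estar \<noteq> {} \<longrightarrow>
           gstar \<in> Dset E f d x estar \<and>
           (\<forall>g\<in>Dset E f d x estar. Cplus (C gstar) (x gstar) (t gstar) \<le> Cplus (C g) (x g) (t g))"
    and "Dset E f d x estar = {} \<longrightarrow> gstar = estar"
  shows "let t' = (\<lambda>h. t h + chi estar h);
             y = (\<lambda>h. x h + chi gstar h - chi estar h)
         in (objective E C t' x \<le> objective E C t' y \<longrightarrow> optimal_sol E f C t' d x) \<and>
            (objective E C t' y \<le> objective E C t' x \<longrightarrow> optimal_sol E f C t' d y)"
proof -
  interpret reoptimization E f d C t x estar
    using assms(1,3,6,7,8) by unfold_locales auto
  define y where "y = transfer x gstar estar"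
  have "y \<in> base_set E f d"
  proof (cases "D = {}")
    case True
    then show ?thesis
      using assms(10) x_in_base_set by (simp add: y_def)
  next
    case False
    then show ?thesis
      using assms(9) by (simp add: y_def Dset_transfer)
  qed
  moreover have "min (objective E C t' x) (objective E C t' y) \<le> objective E C t' w"
    if "w \<in> base_set E f d" for w
  proof (cases "x estar \<le> w estar")
    case True
    then show ?thesis
      using objective_t'_x_le_if_ge[OF that] by simp
  next
    case False
    then have "D \<noteq> {}"
      using ge_if_D_empty[OF _ that] by blast
    then show ?thesis
      using objective_t'_transfer_le_if_less[of gstar w] assms(9) that False by (simp add: y_def)
  qed
  ultimately have "(objective E C t' x \<le> objective E C t' y \<longrightarrow> optimal_sol E f C t' d x) \<and>
                   (objective E C t' y \<le> objective E C t' x \<longrightarrow> optimal_sol E f C t' d y)"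
    by (rule optimal_solI_min[OF x_in_base_set])
  then show ?thesis
    unfolding Let_def y_def transfer_def .
qed

end
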